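(* Let $\mathcal{P}_1,\mathcal{P}_2\subseteq\mathbb{R}^n$ be non-empty topologically closed convex polyhedra. Suppose there exist a linear non-strict inequality constraint $\beta=(\langle \mathbf{a},\mathbf{x}\rangle\le b)$, with $\mathbf{a}\in\mathbb{R}^n\setminus\{\mathbf{0}\}$ and $b\in\mathbb{R}$, and a vector $\mathbf{p}\in\mathbb{R}^n$ such that: (1) $\mathbf{p}$ saturates $\beta$, i.e., $\langle\mathbf{a},\mathbf{p}\rangle=b$; (2) every point of $\mathcal{P}_1$ satisfies $\beta$, while some point of $\mathcal{P}_2$ violates $\beta$; (3) $\mathbf{p}\in\mathcal{P}_1\setminus\mathcal{P}_2$. Then $\mathcal{P}_1\cup\mathcal{P}_2$ is not convex.
   Context: A topologically closed convex polyhedron in $\mathbb{R}^n$ is a set of the form $\{\mathbf{x}\in\mathbb{R}^n : \langle\mathbf{a}_k,\mathbf{x}\rangle\le b_k,\ k=1,\dots,m\}$ for finitely many constraints with $\mathbf{a}_k\neq\mathbf{0}$. *)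

theory Defs
  imports "HOL-Analysis.Analysis"
begin

definition closed_polyhedron :: "(real^'n) set \<Rightarrow> bool" where
  "closed_polyhedron P \<longleftrightarrow>
     (\<exists>(m::nat) (a::nat \<Rightarrow> real^'n) (b::nat \<Rightarrow> real).
        (\<forall>k<m. a k \<noteq> 0) \<and> P = {x. \<forall>k<m. a k \<bullet> x \<le> b k})"

end

theory Submission
  imports Defs
begin

text \<open>If \<open>P\<^sub>1 \<union> P\<^sub>2\<close> were convex, the segment from \<open>p\<close> to a point \<open>q \<in> P\<^sub>2\<close> violating
  \<open>\<beta>\<close> would lie in the union; apart from \<open>p\<close> it strictly violates \<open>\<beta>\<close>, so it avoids \<open>P\<^sub>1\<close>
  and lies in \<open>P\<^sub>2\<close>. Hence \<open>p\<close> is a limit of points of \<open>P\<^sub>2\<close>, and since polyhedra are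
  closed, \<open>p \<in> P\<^sub>2\<close>.\<close>

lemma closed_polyhedron_imp_closed:
  assumes "closed_polyhedron P"
  shows "closed P"
proof -
  obtain m :: nat and a b where "P = {x. \<forall>k<m. a k \<bullet> x \<le> b k}"
    using assms unfolding closed_polyhedron_def by blast
  then have "P = (\<Inter>k\<in>{..<m}. {x. a k \<bullet> x \<le> b k})"
    by auto
  then show ?thesis
    by (simp add: closed_INT closed_halfspace_le)
qed

lemma open_segment_beyond_hyperplane:
  fixes a p q :: "'a::real_inner"
  assumes "a \<bullet> p = b" and "a \<bullet> q > b" and "x \<in> open_segment p q"
  shows "a \<bullet> x > b"
proof -
  obtain u where "0 < u" and x: "x = (1 - u) *\<^sub>R p + u *\<^sub>R q"
    using assms(3) by (auto simp: in_segment)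
  have "a \<bullet> x = b + u * (a \<bullet> q - b)"
    unfolding x using assms(1) by (simp add: algebra_simps)
  then show ?thesis
    using \<open>0 < u\<close> assms(2) by simp
qed

lemma convex_Un_supporting_point_in_closure:
  fixes S T :: "'a::euclidean_space set"
  assumes "convex (S \<union> T)" and "p \<in> S" and "q \<in> T"
    and "\<forall>x\<in>S. a \<bullet> x \<le> b" and "a \<bullet> p = b" and "a \<bullet> q > b"
  shows "p \<in> closure T"
proof -
  have "open_segment p q \<subseteq> S \<union> T"
    using assms(1-3) by (simp add: convex_contains_open_segment)
  moreover have "open_segment p q \<inter> S = {}"
    using open_segment_beyond_hyperplane[OF assms(5,6)] assms(4) by fastforce
  ultimately have "open_segment p q \<subseteq> T"
    by blast
  moreover have "p \<noteq> q"
    using assms(5,6) by auto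
  ultimately have "closed_segment p q \<subseteq> closure T"
    using closure_mono[of "open_segment p q" T] by simp
  then show ?thesis
    by auto
qed

theorem lemma1:
  fixes P1 P2 :: "(real^'n) set" and a p :: "real^'n" and b :: real
  assumes "closed_polyhedron P1" and "closed_polyhedron P2"
    and "P1 \<noteq> {}" and "P2 \<noteq> {}"
    and "a \<noteq> 0"
    and "a \<bullet> p = b"
    and "\<forall>x\<in>P1. a \<bullet> x \<le> b"
    and "\<exists>x\<in>P2. \<not> (a \<bullet> x \<le> b)"
    and "p \<in> P1" and "p \<notin> P2"
  shows "\<not> convex (P1 \<union> P2)"
proof
  assume "convex (P1 \<union> P2)"
  obtain q where "q \<in> P2" and "a \<bullet> q > b"
    using assms(8) by auto
  have "p \<in> closure P2"
    using convex_Un_supporting_point_in_closure[OF \<open>convex (P1 \<union> P2)\<close> assms(9) \<open>q \<in> P2\<close>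
        assms(7,6) \<open>a \<bullet> q > b\<close>] .
  then have "p \<in> P2"
    using closure_closed[OF closed_polyhedron_imp_closed[OF assms(2)]] by simp
  with assms(10) show False by contradiction
qed

end
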